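(* The matrix $\Gamma^{\mathrm{OB}}$ is $(m+1,1/m)$-admissible and implementable with complexity $m$ (with respect to learner actions $\mathcal B_m$, adversary actions = threshold vectors $\vec p\in[0,1]^k$, and payoff $u(\vec b,\vec p)$).
   Context: Online bidding in simultaneous second-price auctions with $k$ items: a bidder has valuation $v:\{0,1\}^k\to\{0,1/m,\dots,m/m\}$ with $v(\vec 0)=0$. Against a threshold vector $\vec p\in[0,1]^k$ (the highest competing bids), a bid vector $\vec b$ wins the bundle $\vec q(\vec b,\vec p)$ with $q_j=\mathbf 1(b_j>p_j)$ and has utility $u(\vec b,\vec p)=v(\vec q(\vec b,\vec p))-\vec p\cdot\vec q(\vec b,\vec p)$. $\mathcal B_m$ is the set of bid vectors $\vec b\in\{0,1/m,\dots,1\}^k$ satisfying no-overbidding: $\vec b\cdot\vec q\le v(\vec q)$ for all $\vec q\in\{0,1\}^k$. $\Gamma^{\mathrm{OB}}$ is the $|\mathcal B_m|\times k$ matrix with row $\Gamma^{\mathrm{OB}}_{\vec b}=\vec b$. A matrix $\Gamma$ is $(\kappa,\delta)$-admissible if its rows are distinct, each column has at most $\kappa$ distinct values, and distinct values within a column differ by at least $\delta$; it is implementable with complexity $M$ if for each column $j$ there is a finite set $S_j$ of pairs $(w,\vec p)$ with $w\ge0$, $|S_j|\le M$, and $\Gamma_{\vec b j}-\Gamma_{\vec b'j}=\sum_{(w,\vec p)\in S_j}w(u(\vec b,\vec p)-u(\vec b',\vec p))$ for all $\vec b,\vec b'\in\mathcal B_m$. *)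

theory Defs
  imports Main "HOL-Library.Countable_Set" Complex_Main
begin

text \<open>Items are indexed by a finite type 'k (so k = CARD('k)).
  A bundle q in {0,1}^k is represented by the set of items with q_j = 1.\<close>

definition grid :: "nat \<Rightarrow> real set" where
  "grid m = {real i / real m | i. i \<le> m}"

definition valuation :: "nat \<Rightarrow> ('k set \<Rightarrow> real) \<Rightarrow> bool" where
  "valuation m v \<longleftrightarrow> v {} = 0 \<and> (\<forall>q. v q \<in> grid m)"

definition won :: "('k \<Rightarrow> real) \<Rightarrow> ('k \<Rightarrow> real) \<Rightarrow> 'k set" where
  "won b p = {j. b j > p j}"

definition util :: "('k::finite set \<Rightarrow> real) \<Rightarrow> ('k \<Rightarrow> real) \<Rightarrow> ('k \<Rightarrow> real) \<Rightarrow> real" where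
  "util v b p = v (won b p) - (\<Sum>j\<in>won b p. p j)"

definition bids :: "nat \<Rightarrow> ('k::finite set \<Rightarrow> real) \<Rightarrow> ('k \<Rightarrow> real) set" where
  "bids m v = {b. (\<forall>j. b j \<in> grid m) \<and> (\<forall>q. (\<Sum>j\<in>q. b j) \<le> v q)}"

definition thresholds :: "('k \<Rightarrow> real) set" where
  "thresholds = {p. \<forall>j. 0 \<le> p j \<and> p j \<le> 1}"

definition gammaOB :: "('k \<Rightarrow> real) \<Rightarrow> 'k \<Rightarrow> real" where
  "gammaOB b j = b j"

definition admissible :: "'r set \<Rightarrow> ('r \<Rightarrow> 'c \<Rightarrow> real) \<Rightarrow> nat \<Rightarrow> real \<Rightarrow> bool" where
  "admissible R \<Gamma> \<kappa> \<delta> \<longleftrightarrow>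
     inj_on \<Gamma> R \<and>
     (\<forall>j. finite ((\<lambda>r. \<Gamma> r j) ` R) \<and> card ((\<lambda>r. \<Gamma> r j) ` R) \<le> \<kappa> \<and>
          (\<forall>x\<in>(\<lambda>r. \<Gamma> r j) ` R. \<forall>y\<in>(\<lambda>r. \<Gamma> r j) ` R. x \<noteq> y \<longrightarrow> \<bar>x - y\<bar> \<ge> \<delta>))"

definition implementable ::
  "'r set \<Rightarrow> 'a set \<Rightarrow> ('r \<Rightarrow> 'a \<Rightarrow> real) \<Rightarrow> ('r \<Rightarrow> 'c \<Rightarrow> real) \<Rightarrow> nat \<Rightarrow> bool" where
  "implementable R P U \<Gamma> M \<longleftrightarrow>
     (\<forall>j. \<exists>S :: (real \<times> 'a) set. finite S \<and> card S \<le> M \<and>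
          (\<forall>(w,p)\<in>S. w \<ge> 0 \<and> p \<in> P) \<and>
          (\<forall>b\<in>R. \<forall>b'\<in>R. \<Gamma> b j - \<Gamma> b' j = (\<Sum>(w,p)\<in>S. w * (U b p - U b' p))))"

end

theory Submission
  imports Defs
begin

text \<open>Every bid lies on the grid, so the admissibility part is a property of the grid alone.
  For implementability in column j, probe bidder b with the thresholds that put
  (i - 1/2)/m on item j and 1 elsewhere, for i = 1..m: no bid exceeds 1, so only item j
  can be won, and it is won exactly when b_j = k/m with i \<le> k. Weighting the i-th probe by
  the inverse of its positive utility v{j} - (i - 1/2)/m, divided by m, each winning probe
  contributes 1/m, so the weighted utilities add up to b_j.\<close>

lemma grid_eq_image: "grid m = (\<lambda>i. real i / real m) ` {..m}"
  unfolding grid_def by auto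

lemma finite_grid: "finite (grid m)"
  unfolding grid_eq_image by simp

lemma card_grid_le: "card (grid m) \<le> m + 1"
  unfolding grid_eq_image using card_image_le[of "{..m}" "\<lambda>i. real i / real m"] by simp

lemma grid_le_1: "x \<in> grid m \<Longrightarrow> x \<le> 1"
  unfolding grid_def by (auto simp: divide_le_eq_1)

lemma grid_separated:
  assumes "m \<ge> 1" "x \<in> grid m" "y \<in> grid m" "x \<noteq> y"
  shows "1 / real m \<le> \<bar>x - y\<bar>"
proof -
  obtain i k where x: "x = real i / m" and y: "y = real k / m"
    using assms(2,3) unfolding grid_def by auto
  have "1 \<le> \<bar>real i - real k\<bar>"
    using assms(4) x y by auto
  moreover have "\<bar>x - y\<bar> = \<bar>real i - real k\<bar> / real m"
    using x y by (simp flip: diff_divide_distrib)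
  ultimately show ?thesis
    using assms(1) by (simp add: divide_right_mono)
qed

lemma sum_grid_midpoints_below:
  assumes "m \<ge> 1" "x \<in> grid m"
  shows "(\<Sum>i=1..m. if (real i - 1/2) / m < x then 1 / real m else 0) = x"
proof -
  obtain k where k: "k \<le> m" "x = real k / m"
    using assms(2) unfolding grid_def by auto
  have "(real i - 1/2) / m < x \<longleftrightarrow> i \<le> k" for i
  proof -
    have "(real i - 1/2) / m < x \<longleftrightarrow> real i - 1/2 < real k"
      using assms(1) k(2) by (simp add: divide_less_cancel)
    also have "\<dots> \<longleftrightarrow> i \<le> k"
      by linarith
    finally show ?thesis .
  qed
  then have "(\<Sum>i=1..m. if (real i - 1/2) / m < x then 1 / real m else 0)
      = (\<Sum>i=1..m. if i \<le> k then 1 / real m else 0)"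
    by simp
  also have "\<dots> = (\<Sum>i=1..k. 1 / real m)"
    by (rule sum.mono_neutral_cong_right) (use k in auto)
  finally show ?thesis
    using k(2) by simp
qed

lemma admissible_if_entries_in_grid:
  assumes "m \<ge> 1" "inj_on \<Gamma> R" "\<And>r j. r \<in> R \<Longrightarrow> \<Gamma> r j \<in> grid m"
  shows "admissible R \<Gamma> (m + 1) (1 / real m)"
  unfolding admissible_def
proof (intro conjI allI assms(2))
  fix j
  have column: "(\<lambda>r. \<Gamma> r j) ` R \<subseteq> grid m"
    using assms(3) by blast
  show "finite ((\<lambda>r. \<Gamma> r j) ` R)"
    using column finite_grid finite_subset by blast
  show "card ((\<lambda>r. \<Gamma> r j) ` R) \<le> m + 1"
    using card_mono[OF finite_grid column] card_grid_le by (rule order_trans)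
  show "\<forall>x\<in>(\<lambda>r. \<Gamma> r j) ` R. \<forall>y\<in>(\<lambda>r. \<Gamma> r j) ` R. x \<noteq> y \<longrightarrow> 1 / real m \<le> \<bar>x - y\<bar>"
    using column grid_separated[OF assms(1)] by blast
qed

lemma bid_in_grid: "b \<in> bids m v \<Longrightarrow> b j \<in> grid m"
  unfolding bids_def by blast

lemma bid_le_singleton_value:
  assumes "b \<in> bids m v" shows "b j \<le> v {j}"
proof -
  have "(\<Sum>l\<in>{j}. b l) \<le> v {j}"
    using assms unfolding bids_def by blast
  then show ?thesis by simp
qed

lemma admissible_gammaOB:
  "m \<ge> 1 \<Longrightarrow> admissible (bids m v) gammaOB (m + 1) (1 / real m)"
proof (rule admissible_if_entries_in_grid)
  show "inj_on gammaOB (bids m v)"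
    by (rule inj_onI) (simp add: gammaOB_def fun_eq_iff)
qed (simp_all add: gammaOB_def bid_in_grid)

lemma implementable_if_columns_represented:
  assumes "\<And>j. \<exists>(I :: 'i set) w p. finite I \<and> card I \<le> M \<and> inj_on p I
      \<and> (\<forall>i\<in>I. 0 \<le> w i \<and> p i \<in> P) \<and> (\<forall>b\<in>R. (\<Sum>i\<in>I. w i * U b (p i)) = \<Gamma> b j)"
  shows "implementable R P U \<Gamma> M"
  unfolding implementable_def
proof
  fix j
  obtain I :: "'i set" and w p where I: "finite I" "card I \<le> M" and inj: "inj_on p I"
    and probes: "\<forall>i\<in>I. 0 \<le> w i \<and> p i \<in> P"
    and column: "\<forall>b\<in>R. (\<Sum>i\<in>I. w i * U b (p i)) = \<Gamma> b j"
    using assms[of j] by blast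
  define S where "S = (\<lambda>i. (w i, p i)) ` I"
  have inj_pair: "inj_on (\<lambda>i. (w i, p i)) I"
    using inj by (auto simp: inj_on_def)
  have "\<Gamma> b j - \<Gamma> b' j = (\<Sum>(w, p)\<in>S. w * (U b p - U b' p))"
    if "b \<in> R" "b' \<in> R" for b b'
    using that column
    by (simp add: S_def sum.reindex[OF inj_pair] right_diff_distrib sum_subtractf)
  moreover have "card S \<le> M"
    using I card_image_le[of I] unfolding S_def by (meson order_trans)
  ultimately show "\<exists>S :: (real \<times> _) set. finite S \<and> card S \<le> M
      \<and> (\<forall>(w, p)\<in>S. 0 \<le> w \<and> p \<in> P)
      \<and> (\<forall>b\<in>R. \<forall>b'\<in>R. \<Gamma> b j - \<Gamma> b' j = (\<Sum>(w, p)\<in>S. w * (U b p - U b' p)))"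
    using I probes by (intro exI[of _ S]) (auto simp: S_def)
qed

definition probe :: "nat \<Rightarrow> 'k \<Rightarrow> nat \<Rightarrow> 'k \<Rightarrow> real" where
  "probe m j i = (\<lambda>l. if l = j then (real i - 1/2) / m else 1)"

text \<open>The weight is irrelevant (set to 0) when v{j} does not exceed the threshold, since then
  no bid on the grid wins item j.\<close>
definition probe_weight :: "nat \<Rightarrow> ('k set \<Rightarrow> real) \<Rightarrow> 'k \<Rightarrow> nat \<Rightarrow> real" where
  "probe_weight m v j i =
     (if (real i - 1/2) / m < v {j} then 1 / (m * (v {j} - (real i - 1/2) / m)) else 0)"

lemma probe_in_thresholds: "i \<in> {1..m} \<Longrightarrow> probe m j i \<in> thresholds"
  unfolding thresholds_def probe_def by (auto simp: divide_le_eq_1)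

lemma inj_on_probe: "m \<ge> 1 \<Longrightarrow> inj_on (probe m j) {1..m}"
  by (rule inj_onI) (drule fun_cong[of _ _ j], simp add: probe_def)

lemma won_probe:
  assumes "\<And>l. b l \<le> 1"
  shows "won b (probe m j i) = (if (real i - 1/2) / m < b j then {j} else {})"
proof -
  have "l \<in> won b (probe m j i) \<longleftrightarrow> l = j \<and> (real i - 1/2) / m < b j" for l
    using assms[of l] by (cases "l = j") (auto simp: won_def probe_def)
  then show ?thesis
    by (simp add: set_eq_iff)
qed

lemma weighted_util_probe:
  assumes "m \<ge> 1" "valuation m v" "b \<in> bids m v"
  shows "probe_weight m v j i * util v b (probe m j i)
    = (if (real i - 1/2) / m < b j then 1 / real m else 0)"
proof -
  define t where "t = (real i - 1/2) / m"
  have won: "won b (probe m j i) = (if t < b j then {j} else {})"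
    unfolding t_def by (rule won_probe, rule grid_le_1, rule bid_in_grid[OF assms(3)])
  show ?thesis
  proof (cases "t < b j")
    case True
    then have "t < v {j}"
      using bid_le_singleton_value[OF assms(3)] by (meson less_le_trans)
    moreover have "util v b (probe m j i) = v {j} - t"
      using True unfolding util_def won by (simp add: probe_def t_def)
    ultimately show ?thesis
      using True assms(1) by (simp add: probe_weight_def t_def)
  next
    case False
    moreover have "v {} = 0"
      using assms(2) unfolding valuation_def by blast
    ultimately show ?thesis
      unfolding util_def won by (simp flip: t_def)
  qed
qed

lemma sum_weighted_util_probes:
  assumes "m \<ge> 1" "valuation m v" "b \<in> bids m v"
  shows "(\<Sum>i=1..m. probe_weight m v j i * util v b (probe m j i)) = b j"
  unfolding weighted_util_probe[OF assms]
  using sum_grid_midpoints_below[OF assms(1) bid_in_grid[OF assms(3)]] .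

lemma implementable_gammaOB:
  assumes "m \<ge> 1" "valuation m v"
  shows "implementable (bids m v) thresholds (util v) gammaOB m"
proof (rule implementable_if_columns_represented)
  fix j
  show "\<exists>(I :: nat set) w p. finite I \<and> card I \<le> m \<and> inj_on p I
      \<and> (\<forall>i\<in>I. 0 \<le> w i \<and> p i \<in> thresholds)
      \<and> (\<forall>b\<in>bids m v. (\<Sum>i\<in>I. w i * util v b (p i)) = gammaOB b j)"
  proof (intro exI[of _ "{1..m}"] exI[of _ "probe_weight m v j"] exI[of _ "probe m j"] conjI ballI)
    show "inj_on (probe m j) {1..m}"
      using assms(1) by (rule inj_on_probe)
    show "0 \<le> probe_weight m v j i" and "probe m j i \<in> thresholds" if "i \<in> {1..m}" for i
      using that by (simp_all add: probe_weight_def probe_in_thresholds)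
    show "(\<Sum>i\<in>{1..m}. probe_weight m v j i * util v b (probe m j i)) = gammaOB b j"
      if "b \<in> bids m v" for b
      using sum_weighted_util_probes[OF assms that] by (simp add: gammaOB_def)
  qed simp_all
qed

theorem lemma6p2:
  fixes m :: nat and v :: "'k::finite set \<Rightarrow> real"
  assumes "m \<ge> 1" and "valuation m v"
  shows "admissible (bids m v) gammaOB (m + 1) (1 / real m)
       \<and> implementable (bids m v) thresholds (util v) gammaOB m"
  using admissible_gammaOB[OF assms(1)] implementable_gammaOB[OF assms] ..

end
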